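(* For each $t\in[0,1)$ the operator $C_t\colon H(\mathbb{D})\to H(\mathbb{D})$ is power bounded and uniformly mean ergodic, but it is not supercyclic. Moreover, $(I-C_t)(H(\mathbb{D}))=\{g\in H(\mathbb{D}):g(0)=0\}$, which is a closed subspace of $H(\mathbb{D})$, and $$H(\mathbb{D})=\operatorname{Ker}(I-C_t)\oplus(I-C_t)(H(\mathbb{D})).$$
   Context: $\mathbb{D}=\{z\in\mathbb{C}:|z|<1\}$ and $H(\mathbb{D})$ is the Fréchet space of holomorphic functions on $\mathbb{D}$ with the topology of uniform convergence on compact subsets. For $t\in[0,1]$, $C_t$ is defined on $f\in H(\mathbb{D})$ by $C_tf(0)=f(0)$ and $C_tf(z)=\frac{1}{z}\int_0^z\frac{f(\xi)}{1-t\xi}\,d\xi$ for $z\neq0$. A continuous linear operator $T$ on a locally convex Hausdorff space $X$ is power bounded if $\{T^n:n\in\mathbb{N}_0\}$ is equicontinuous; it is uniformly mean ergodic if the Cesàro means $T_{[n]}=\frac1n\sum_{m=1}^nT^m$ converge in the topology of uniform convergence on bounded subsets of $X$; it is supercyclic if there is $z\in X$ with $\{\lambda T^nz:\lambda\in\mathbb{C},n\in\mathbb{N}_0\}$ dense in $X$. *)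

theory Defs
  imports "HOL-Complex_Analysis.Complex_Analysis"
begin

text \<open>H(D): holomorphic functions on the unit disc, represented as functions
  complex => complex that vanish outside the disc (canonical representatives).\<close>
definition HD :: "(complex \<Rightarrow> complex) set" where
  "HD = {f. f holomorphic_on ball 0 1 \<and> (\<forall>z. z \<notin> ball 0 1 \<longrightarrow> f z = 0)}"

text \<open>Fundamental sequence of seminorms defining the Frechet topology of compact
  convergence: sup over the closed disc of radius (n+1)/(n+2).\<close>
definition pn :: "nat \<Rightarrow> (complex \<Rightarrow> complex) \<Rightarrow> real" where
  "pn n f = (SUP z\<in>cball 0 (real (n+1) / real (n+2)). cmod (f z))"

definition Ct :: "real \<Rightarrow> (complex \<Rightarrow> complex) \<Rightarrow> (complex \<Rightarrow> complex)" where
  "Ct t f = (\<lambda>z. if z \<notin> ball 0 1 then 0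
                 else if z = 0 then f 0
                 else contour_integral (linepath 0 z) (\<lambda>\<xi>. f \<xi> / (1 - of_real t * \<xi>)) / z)"

definition cesaro :: "((complex \<Rightarrow> complex) \<Rightarrow> (complex \<Rightarrow> complex)) \<Rightarrow> nat
                      \<Rightarrow> (complex \<Rightarrow> complex) \<Rightarrow> (complex \<Rightarrow> complex)" where
  "cesaro T n f = (\<lambda>z. (\<Sum>m=1..n. (T ^^ m) f z) / of_nat n)"

definition linear_H :: "((complex \<Rightarrow> complex) \<Rightarrow> (complex \<Rightarrow> complex)) \<Rightarrow> bool" where
  "linear_H T \<longleftrightarrow> (\<forall>f\<in>HD. \<forall>g\<in>HD. \<forall>a::complex.
      T (\<lambda>z. f z + g z) = (\<lambda>z. T f z + T g z) \<and> T (\<lambda>z. a * f z) = (\<lambda>z. a * T f z))"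

definition continuous_H :: "((complex \<Rightarrow> complex) \<Rightarrow> (complex \<Rightarrow> complex)) \<Rightarrow> bool" where
  "continuous_H T \<longleftrightarrow> (\<forall>n. \<exists>m C. \<forall>f\<in>HD. pn n (T f) \<le> C * pn m f)"

text \<open>Equicontinuity of the powers T^k, k in N_0 (for linear maps on a Frechet space
  with the above fundamental system of seminorms).\<close>
definition power_bounded_H :: "((complex \<Rightarrow> complex) \<Rightarrow> (complex \<Rightarrow> complex)) \<Rightarrow> bool" where
  "power_bounded_H T \<longleftrightarrow> (\<forall>n. \<exists>m C. \<forall>k. \<forall>f\<in>HD. pn n ((T ^^ k) f) \<le> C * pn m f)"

definition bounded_H :: "(complex \<Rightarrow> complex) set \<Rightarrow> bool" where
  "bounded_H B \<longleftrightarrow> B \<subseteq> HD \<and> (\<forall>n. \<exists>M. \<forall>f\<in>B. pn n f \<le> M)"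

text \<open>Cesaro means converge in L_b(H(D)) (uniformly on bounded sets) to some
  continuous linear operator P.\<close>
definition uniformly_mean_ergodic_H :: "((complex \<Rightarrow> complex) \<Rightarrow> (complex \<Rightarrow> complex)) \<Rightarrow> bool" where
  "uniformly_mean_ergodic_H T \<longleftrightarrow> (\<exists>P. (\<forall>f\<in>HD. P f \<in> HD) \<and> linear_H P \<and> continuous_H P \<and>
     (\<forall>B. bounded_H B \<longrightarrow> (\<forall>n. \<forall>\<epsilon>>0. eventually (\<lambda>k.
         \<forall>f\<in>B. pn n (\<lambda>z. cesaro T k f z - P f z) \<le> \<epsilon>) sequentially)))"

definition supercyclic_H :: "((complex \<Rightarrow> complex) \<Rightarrow> (complex \<Rightarrow> complex)) \<Rightarrow> bool" where
  "supercyclic_H T \<longleftrightarrow> (\<exists>x\<in>HD. \<forall>g\<in>HD. \<forall>n. \<forall>\<epsilon>>0. \<exists>(c::complex) (k::nat).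
      pn n (\<lambda>z. c * (T ^^ k) x z - g z) < \<epsilon>)"

definition subspace_H :: "(complex \<Rightarrow> complex) set \<Rightarrow> bool" where
  "subspace_H S \<longleftrightarrow> S \<subseteq> HD \<and> (\<lambda>z. 0) \<in> S \<and>
     (\<forall>f\<in>S. \<forall>g\<in>S. \<forall>a::complex. (\<lambda>z. f z + g z) \<in> S \<and> (\<lambda>z. a * f z) \<in> S)"

text \<open>Closedness in the (metrizable) topology of compact convergence, i.e. sequential closedness.\<close>
definition closed_H :: "(complex \<Rightarrow> complex) set \<Rightarrow> bool" where
  "closed_H S \<longleftrightarrow> (\<forall>F g. (\<forall>k. F k \<in> S) \<longrightarrow> g \<in> HD \<longrightarrow>
      (\<forall>n. (\<lambda>k. pn n (\<lambda>z. F k z - g z)) \<longlonglongrightarrow> 0) \<longrightarrow> g \<in> S)"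

end

theory Submission
  imports Defs
begin

text \<open>The operator \<open>C\<^sub>t\<close> fixes \<open>e\<^sub>t(z) = 1 / (1 - tz)\<close> and preserves the value at \<open>0\<close>, so
  \<open>f = f(0) e\<^sub>t + (f - f(0) e\<^sub>t)\<close> splits \<open>H(D)\<close> into the line through \<open>e\<^sub>t\<close> and the functions
  vanishing at \<open>0\<close>. Substituting \<open>\<xi> = sz / (1 - tz + tzs)\<close> in the defining integral gives
  \<open>(1 - tz) C\<^sub>t f(z) = \<integral>\<^sub>0\<^sup>1 (1 - t\<xi>) f(\<xi>) ds\<close> with \<open>|\<xi>| \<le> |z| (1 - (1 - t)(1 - s))\<close>, so by
  Schwarz's lemma \<open>C\<^sub>t\<close> contracts the weighted sup norms of \<open>(1 - tz) g(z)\<close> on discs by the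
  factor \<open>(1 + t) / 2\<close> whenever \<open>g(0) = 0\<close>. Hence \<open>C\<^sub>t\<^sup>k f \<rightarrow> f(0) e\<^sub>t\<close> geometrically, uniformly on
  bounded sets, which gives power boundedness, uniform mean ergodicity and
  \<open>Ker(I - C\<^sub>t) = \<complex> e\<^sub>t\<close>; and since orbits stay bounded at every point while their value at \<open>0\<close>
  is fixed, no projective orbit is dense.\<close>

definition pn_radius :: "nat \<Rightarrow> real" where
  "pn_radius n = real (n+1) / real (n+2)"

lemma pn_radius_pos: "0 < pn_radius n"
  by (simp add: pn_radius_def)

lemma pn_radius_less_1: "pn_radius n < 1"
  by (simp add: pn_radius_def)

lemma pn_eq_SUP: "pn n f = (SUP z\<in>cball 0 (pn_radius n). cmod (f z))"
  by (simp add: pn_def pn_radius_def)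

lemma norm_le_pn:
  assumes f: "f \<in> HD" and z: "z \<in> cball 0 (pn_radius n)"
  shows "cmod (f z) \<le> pn n f"
proof -
  have "cball 0 (pn_radius n) \<subseteq> ball 0 1"
    using pn_radius_less_1[of n] by auto
  then have "continuous_on (cball 0 (pn_radius n)) f"
    using f unfolding HD_def by (auto intro: continuous_on_subset holomorphic_on_imp_continuous_on)
  then have "compact ((\<lambda>z. cmod (f z)) ` cball 0 (pn_radius n))"
    by (intro compact_continuous_image continuous_intros) auto
  then have "bdd_above ((\<lambda>z. cmod (f z)) ` cball 0 (pn_radius n))"
    by (meson bounded_imp_bdd_above compact_imp_bounded)
  then show ?thesis
    unfolding pn_eq_SUP using z by (intro cSUP_upper)
qed

lemma pn_le:
  assumes "\<And>z. z \<in> cball 0 (pn_radius n) \<Longrightarrow> cmod (f z) \<le> B"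
  shows "pn n f \<le> B"
  unfolding pn_eq_SUP using assms pn_radius_pos[of n] by (intro cSUP_least) auto

lemma norm_at_0_le_pn: "f \<in> HD \<Longrightarrow> cmod (f 0) \<le> pn n f"
  by (rule norm_le_pn) (simp_all add: pn_radius_pos less_imp_le)

lemma pn_nonneg: "f \<in> HD \<Longrightarrow> 0 \<le> pn n f"
  using norm_at_0_le_pn norm_ge_zero order_trans by blast

lemma in_some_pn_cball:
  assumes "z \<in> ball (0::complex) 1"
  obtains n where "z \<in> cball 0 (pn_radius n)"
proof -
  have "1 - cmod z > 0" using assms by simp
  then obtain n where n: "inverse (real (Suc n)) < 1 - cmod z"
    using reals_Archimedean by blast
  have "inverse (real (n + 2)) \<le> inverse (real (Suc n))" by simp
  moreover have "pn_radius n = 1 - inverse (real (n + 2))"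
    by (simp add: pn_radius_def field_simps)
  ultimately have "cmod z \<le> pn_radius n" using n by linarith
  then show ?thesis using that by simp
qed

lemma HD_lincomb: "f \<in> HD \<Longrightarrow> g \<in> HD \<Longrightarrow> (\<lambda>z. a * f z + b * g z) \<in> HD"
  unfolding HD_def by (auto intro!: holomorphic_intros)

lemma HD_cmult: "f \<in> HD \<Longrightarrow> (\<lambda>z. a * f z) \<in> HD"
  using HD_lincomb[of f f a 0] by simp

lemma HD_diff: "f \<in> HD \<Longrightarrow> g \<in> HD \<Longrightarrow> (\<lambda>z. f z - g z) \<in> HD"
  using HD_lincomb[of f g 1 "-1"] by simp

lemma HD_zero: "(\<lambda>z. 0) \<in> HD"
  unfolding HD_def by auto

lemma HD_restrict:
  "h holomorphic_on ball 0 1 \<Longrightarrow> (\<lambda>z. if z \<in> ball 0 1 then h z else 0) \<in> HD"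
  unfolding HD_def by (auto intro: holomorphic_transform[of h])

lemma HD_pointwise_limit:
  assumes F: "\<And>k. F k \<in> HD" and g: "g \<in> HD"
    and lim: "\<And>n. (\<lambda>k. pn n (\<lambda>z. F k z - g z)) \<longlonglongrightarrow> 0"
  shows "(\<lambda>k. F k z) \<longlonglongrightarrow> g z"
proof (cases "z \<in> ball 0 1")
  case True
  then obtain n where z: "z \<in> cball 0 (pn_radius n)" by (rule in_some_pn_cball)
  have "\<And>k. norm (F k z - g z) \<le> pn n (\<lambda>z. F k z - g z)"
    using norm_le_pn[OF HD_diff[OF F g] z] by simp
  then have "(\<lambda>k. F k z - g z) \<longlonglongrightarrow> 0"
    by (intro Lim_null_comparison[OF _ lim[of n]]) auto
  then show ?thesis by (rule LIM_zero_cancel)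
next
  case False
  then show ?thesis using F g by (simp add: HD_def)
qed

section \<open>The operator \<open>C\<^sub>t\<close>\<close>

lemma norm_one_minus_of_real_mult_ge:
  assumes "0 \<le> t" "cmod z \<le> 1"
  shows "1 - t \<le> cmod (1 - of_real t * z)"
proof -
  have "cmod (of_real t * z) \<le> t" using assms by (simp add: norm_mult mult_left_le)
  moreover have "1 - cmod (of_real t * z) \<le> cmod (1 - of_real t * z)"
    by (metis norm_one norm_triangle_ineq2)
  ultimately show ?thesis by linarith
qed

lemma norm_one_minus_of_real_mult_le:
  assumes "0 \<le> t" "cmod z \<le> 1"
  shows "cmod (1 - of_real t * z) \<le> 1 + t"
proof -
  have "cmod (of_real t * z) \<le> t" using assms by (simp add: norm_mult mult_left_le)
  then show ?thesis using norm_triangle_ineq4[of 1 "of_real t * z"] by simp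
qed

lemma one_minus_of_real_mult_nonzero:
  assumes "0 \<le> t" "t < 1" "cmod z \<le> 1"
  shows "1 - of_real t * z \<noteq> 0"
  using norm_one_minus_of_real_mult_ge[OF assms(1,3)] assms(2) by auto

lemma Ct_outside: "z \<notin> ball 0 1 \<Longrightarrow> Ct t f z = 0"
  by (simp add: Ct_def)

lemma Ct_at_0: "Ct t f 0 = f 0"
  by (simp add: Ct_def)

lemma Ct_pow_at_0: "(Ct t ^^ k) f 0 = f 0"
  by (induction k) (auto simp: Ct_at_0)

lemma holomorphic_convex_primitive_at:
  assumes "F holomorphic_on S" "convex S" "open S"
  obtains \<Phi> where "\<And>x. x \<in> S \<Longrightarrow> (\<Phi> has_field_derivative F x) (at x)"
  using holomorphic_convex_primitive'[OF assms(2,3,1)] assms(3) by (metis at_within_open)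

lemma contour_integral_linepath_primitive:
  assumes "\<And>x. x \<in> S \<Longrightarrow> (\<Phi> has_field_derivative F x) (at x)"
    and "closed_segment a b \<subseteq> S"
  shows "contour_integral (linepath a b) F = \<Phi> b - \<Phi> a"
proof -
  have "(F has_contour_integral (\<Phi> b - \<Phi> a)) (linepath a b)"
    using contour_integral_primitive[of S \<Phi> F "linepath a b"] assms
    by (auto intro: has_field_derivative_at_within)
  then show ?thesis by (rule contour_integral_unique)
qed

lemma Ct_integrand_primitive:
  assumes t: "0 \<le> t" "t < 1" and f: "f \<in> HD"
  obtains \<Phi> where "\<forall>x\<in>ball 0 1. (\<Phi> has_field_derivative f x / (1 - of_real t * x)) (at x)"
proof -
  have "(\<lambda>x. f x / (1 - of_real t * x)) holomorphic_on ball 0 1"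
    using f one_minus_of_real_mult_nonzero[OF t] unfolding HD_def
    by (intro holomorphic_intros) auto
  then obtain \<Phi> where "\<And>x. x \<in> ball 0 1 \<Longrightarrow> (\<Phi> has_field_derivative f x / (1 - of_real t * x)) (at x)"
    using holomorphic_convex_primitive_at[OF _ convex_ball open_ball] by blast
  then show ?thesis using that by blast
qed

lemma Ct_eq_primitive:
  assumes \<Phi>: "\<forall>x\<in>ball 0 1. (\<Phi> has_field_derivative f x / (1 - of_real t * x)) (at x)"
    and z: "z \<in> ball 0 1" "z \<noteq> 0"
  shows "Ct t f z = (\<Phi> z - \<Phi> 0) / z"
proof -
  have "closed_segment 0 z \<subseteq> ball 0 1"
    using z by (intro closed_segment_subset) auto
  then show ?thesis
    using z contour_integral_linepath_primitive[where S="ball 0 1"] \<Phi> by (simp add: Ct_def)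
qed

lemma Ct_HD:
  assumes t: "0 \<le> t" "t < 1" and f: "f \<in> HD"
  shows "Ct t f \<in> HD"
proof -
  obtain \<Phi> where \<Phi>: "\<forall>x\<in>ball 0 1. (\<Phi> has_field_derivative f x / (1 - of_real t * x)) (at x)"
    using Ct_integrand_primitive[OF t f] by blast
  then have "\<Phi> holomorphic_on ball 0 1"
    by (auto simp: holomorphic_on_open field_differentiable_def)
  then have quotient: "(\<lambda>z. if z = 0 then deriv \<Phi> 0 else (\<Phi> z - \<Phi> 0) / (z - 0)) holomorphic_on ball 0 1"
    by (rule pole_lemma) auto
  have "(\<Phi> has_field_derivative f 0) (at 0)"
    using bspec[OF \<Phi>, of 0] by simp
  then have "deriv \<Phi> 0 = f 0" by (rule DERIV_imp_deriv)
  have "Ct t f holomorphic_on ball 0 1"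
  proof (rule holomorphic_transform[OF quotient])
    fix z :: complex assume "z \<in> ball 0 1"
    then show "(if z = 0 then deriv \<Phi> 0 else (\<Phi> z - \<Phi> 0) / (z - 0)) = Ct t f z"
      using \<open>deriv \<Phi> 0 = f 0\<close> by (cases "z = 0") (simp_all add: Ct_at_0 Ct_eq_primitive[OF \<Phi>])
  qed
  then show ?thesis unfolding HD_def by (auto simp: Ct_outside)
qed

lemma Ct_pow_HD: "0 \<le> t \<Longrightarrow> t < 1 \<Longrightarrow> f \<in> HD \<Longrightarrow> (Ct t ^^ k) f \<in> HD"
  by (induction k) (auto simp: Ct_HD)

lemma Ct_lincomb:
  assumes t: "0 \<le> t" "t < 1" and f: "f \<in> HD" and g: "g \<in> HD"
  shows "Ct t (\<lambda>z. a * f z + b * g z) = (\<lambda>z. a * Ct t f z + b * Ct t g z)"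
proof
  fix z :: complex
  obtain \<Phi> where \<Phi>: "\<forall>x\<in>ball 0 1. (\<Phi> has_field_derivative f x / (1 - of_real t * x)) (at x)"
    using Ct_integrand_primitive[OF t f] by blast
  obtain \<Psi> where \<Psi>: "\<forall>x\<in>ball 0 1. (\<Psi> has_field_derivative g x / (1 - of_real t * x)) (at x)"
    using Ct_integrand_primitive[OF t g] by blast
  have \<Theta>: "\<forall>x\<in>ball 0 1. ((\<lambda>x. a * \<Phi> x + b * \<Psi> x) has_field_derivative (a * f x + b * g x) / (1 - of_real t * x)) (at x)"
    using \<Phi> \<Psi>
    by (auto intro!: derivative_eq_intros simp: add_divide_distrib mult.commute)
  show "Ct t (\<lambda>z. a * f z + b * g z) z = a * Ct t f z + b * Ct t g z"
  proof (cases "z \<in> ball 0 1 \<and> z \<noteq> 0")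
    case True
    then have z: "z \<in> ball 0 1" "z \<noteq> 0" by auto
    show ?thesis
      unfolding Ct_eq_primitive[OF \<Theta> z] Ct_eq_primitive[OF \<Phi> z] Ct_eq_primitive[OF \<Psi> z]
      by (simp add: diff_divide_distrib add_divide_distrib algebra_simps)
  qed (auto simp: Ct_def)
qed

lemma Ct_pow_lincomb:
  assumes t: "0 \<le> t" "t < 1" and f: "f \<in> HD" and g: "g \<in> HD"
  shows "(Ct t ^^ k) (\<lambda>z. a * f z + b * g z) = (\<lambda>z. a * (Ct t ^^ k) f z + b * (Ct t ^^ k) g z)"
proof (induction k)
  case (Suc k)
  then show ?case
    using Ct_lincomb[OF t Ct_pow_HD[OF t f, of k] Ct_pow_HD[OF t g, of k], of a b] by simp
qed simp

section \<open>The fixed function and the decomposition of \<open>H(D)\<close>\<close>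

definition fixed_fun :: "real \<Rightarrow> complex \<Rightarrow> complex" where
  "fixed_fun t = (\<lambda>z. if z \<in> ball 0 1 then 1 / (1 - of_real t * z) else 0)"

lemma fixed_fun_HD: "0 \<le> t \<Longrightarrow> t < 1 \<Longrightarrow> fixed_fun t \<in> HD"
  unfolding fixed_fun_def using one_minus_of_real_mult_nonzero
  by (intro HD_restrict holomorphic_intros) auto

lemma fixed_fun_at_0: "fixed_fun t 0 = 1"
  by (simp add: fixed_fun_def)

lemma norm_fixed_fun_le:
  assumes "0 \<le> t" "t < 1"
  shows "cmod (fixed_fun t z) \<le> 1 / (1 - t)"
proof (cases "z \<in> ball 0 1")
  case True
  then have "1 - t \<le> cmod (1 - of_real t * z)"
    using assms by (intro norm_one_minus_of_real_mult_ge) auto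
  then show ?thesis
    using True assms by (simp add: fixed_fun_def norm_divide frac_le)
qed (use assms in \<open>simp add: fixed_fun_def\<close>)

lemma Ct_fixed_fun:
  assumes t: "0 \<le> t" "t < 1"
  shows "Ct t (fixed_fun t) = fixed_fun t"
proof
  fix z :: complex
  have \<Phi>: "\<forall>x\<in>ball 0 1. ((\<lambda>x. x / (1 - of_real t * x)) has_field_derivative fixed_fun t x / (1 - of_real t * x)) (at x)"
    using one_minus_of_real_mult_nonzero[OF t]
    by (auto intro!: derivative_eq_intros simp: fixed_fun_def field_simps power2_eq_square)
  show "Ct t (fixed_fun t) z = fixed_fun t z"
  proof (cases "z \<in> ball 0 1 \<and> z \<noteq> 0")
    case True
    then have z: "z \<in> ball 0 1" "z \<noteq> 0" by auto
    then show ?thesis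
      unfolding Ct_eq_primitive[OF \<Phi> z] by (simp add: fixed_fun_def)
  qed (auto simp: Ct_def fixed_fun_def)
qed

definition ker_proj :: "real \<Rightarrow> (complex \<Rightarrow> complex) \<Rightarrow> complex \<Rightarrow> complex" where
  "ker_proj t f = (\<lambda>z. f 0 * fixed_fun t z)"

lemma ker_proj_HD: "0 \<le> t \<Longrightarrow> t < 1 \<Longrightarrow> ker_proj t f \<in> HD"
  unfolding ker_proj_def by (intro HD_cmult fixed_fun_HD)

lemma ker_proj_at_0: "ker_proj t f 0 = f 0"
  by (simp add: ker_proj_def fixed_fun_at_0)

lemma Ct_ker_proj:
  assumes t: "0 \<le> t" "t < 1"
  shows "Ct t (ker_proj t f) = ker_proj t f"
  using Ct_lincomb[OF t fixed_fun_HD[OF t] fixed_fun_HD[OF t], of "f 0" 0]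
  by (simp add: ker_proj_def Ct_fixed_fun[OF t])

lemma Ct_pow_ker_proj: "0 \<le> t \<Longrightarrow> t < 1 \<Longrightarrow> (Ct t ^^ k) (ker_proj t f) = ker_proj t f"
  by (induction k) (simp_all add: Ct_ker_proj)

lemma pn_ker_proj_le:
  assumes t: "0 \<le> t" "t < 1" and f: "f \<in> HD"
  shows "pn n (ker_proj t f) \<le> pn n f / (1 - t)"
proof (rule pn_le)
  fix z
  have "cmod (f 0) * cmod (fixed_fun t z) \<le> pn n f * (1 / (1 - t))"
    using norm_at_0_le_pn[OF f] norm_fixed_fun_le[OF t] pn_nonneg[OF f] by (intro mult_mono) auto
  then show "cmod (ker_proj t f z) \<le> pn n f / (1 - t)"
    by (simp add: ker_proj_def norm_mult)
qed

lemma vanishing_part_HD: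
  "0 \<le> t \<Longrightarrow> t < 1 \<Longrightarrow> f \<in> HD \<Longrightarrow> (\<lambda>z. f z - ker_proj t f z) \<in> HD"
  by (intro HD_diff ker_proj_HD)

lemma pn_vanishing_part_le:
  assumes t: "0 \<le> t" "t < 1" and f: "f \<in> HD"
  shows "pn n (\<lambda>z. f z - ker_proj t f z) \<le> (1 + 1 / (1 - t)) * pn n f"
proof (rule pn_le)
  fix z :: complex assume z: "z \<in> cball 0 (pn_radius n)"
  have "cmod (f z - ker_proj t f z) \<le> cmod (f z) + pn n (ker_proj t f)"
    using norm_le_pn[OF ker_proj_HD[OF t] z] norm_triangle_ineq4 by (metis add_left_mono order_trans)
  also have "\<dots> \<le> pn n f + pn n f / (1 - t)"
    using norm_le_pn[OF f z] pn_ker_proj_le[OF t f] by (rule add_mono)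
  finally show "cmod (f z - ker_proj t f z) \<le> (1 + 1 / (1 - t)) * pn n f"
    by (simp add: algebra_simps)
qed

lemma Ct_pow_decomp:
  assumes t: "0 \<le> t" "t < 1" and f: "f \<in> HD"
  shows "(Ct t ^^ k) f = (\<lambda>z. ker_proj t f z + (Ct t ^^ k) (\<lambda>z. f z - ker_proj t f z) z)"
  using Ct_pow_lincomb[OF t ker_proj_HD[OF t, of f] vanishing_part_HD[OF t f], where a=1 and b=1]
  by (simp add: Ct_pow_ker_proj[OF t])

section \<open>Contraction on functions vanishing at \<open>0\<close>\<close>

definition Ct_path :: "real \<Rightarrow> complex \<Rightarrow> complex \<Rightarrow> complex" where
  "Ct_path t z w = w * z / (1 - of_real t * z + of_real t * z * w)"

lemma Ct_path_denom_eq: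
  fixes t s :: real and z :: complex
  shows "1 - of_real t * z + of_real t * z * of_real s = 1 - of_real (t * (1 - s)) * z"
  by (simp add: algebra_simps)

lemma Ct_path_denom_bounds:
  assumes "0 \<le> t" "t < 1" "cmod z \<le> 1" "s \<in> {0..1}"
  shows "0 \<le> t * (1 - s)" "t * (1 - s) < 1"
    and "1 - of_real t * z + of_real t * z * of_real s \<noteq> 0"
proof -
  show u: "0 \<le> t * (1 - s)" "t * (1 - s) < 1"
    using assms mult_left_le[of "1 - s" t] by auto
  show "1 - of_real t * z + of_real t * z * of_real s \<noteq> 0"
    unfolding Ct_path_denom_eq using one_minus_of_real_mult_nonzero[OF u assms(3)] .
qed

lemma norm_Ct_path_le:
  assumes t: "0 \<le> t" "t < 1" and z: "cmod z \<le> 1" and s: "s \<in> {0..1}"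
  shows "cmod (Ct_path t z (of_real s)) \<le> cmod z * (1 - (1 - t) * (1 - s))"
proof -
  define u where "u = t * (1 - s)"
  have u: "0 \<le> u" "u < 1" using Ct_path_denom_bounds[OF t z s] by (simp_all add: u_def)
  have "cmod (Ct_path t z (of_real s)) = s * cmod z / cmod (1 - of_real u * z)"
    using s by (simp add: Ct_path_def Ct_path_denom_eq u_def norm_mult norm_divide)
  also have "\<dots> \<le> s * cmod z / (1 - u)"
    using s u norm_one_minus_of_real_mult_ge[OF u(1) z] by (intro divide_left_mono mult_pos_pos) auto
  also have "\<dots> \<le> cmod z * (1 - (1 - t) * (1 - s))"
  proof -
    have "(1 - u) * (1 - (1 - t) * (1 - s)) = s + t * (1 - t) * (1 - s)^2"
      by (simp add: u_def power2_eq_square algebra_simps)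
    moreover have "0 \<le> t * (1 - t) * (1 - s)^2" using t by simp
    ultimately have "s \<le> (1 - u) * (1 - (1 - t) * (1 - s))" by linarith
    then have "s * cmod z \<le> (1 - u) * (1 - (1 - t) * (1 - s)) * cmod z"
      by (rule mult_right_mono) simp
    then show ?thesis using u by (simp add: divide_le_eq mult_ac)
  qed
  finally show ?thesis .
qed

lemma Ct_path_in_cball:
  assumes "0 \<le> t" "t < 1" "cmod z \<le> 1" "s \<in> {0..1}"
  shows "cmod (Ct_path t z (of_real s)) \<le> cmod z"
proof -
  have "0 \<le> (1 - t) * (1 - s)" using assms by auto
  then have "cmod z * (1 - (1 - t) * (1 - s)) \<le> cmod z"
    by (simp add: mult_left_le)
  then show ?thesis using norm_Ct_path_le[OF assms] by linarith
qed

text \<open>The substitution \<open>\<xi> = Ct_path t z s\<close>, a path from \<open>0\<close> to \<open>z\<close> inside \<open>cball 0 |z|\<close>, turns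
  \<open>d\<xi> / (1 - t\<xi>)\<close> into \<open>z (1 - t\<xi>) / (1 - tz) ds\<close>.\<close>
lemma Ct_integral_repr:
  assumes t: "0 \<le> t" "t < 1" and f: "f \<in> HD" and z: "z \<in> ball 0 1"
  shows "((\<lambda>s. (1 - of_real t * Ct_path t z (of_real s)) * f (Ct_path t z (of_real s)))
          has_integral ((1 - of_real t * z) * Ct t f z)) {0..1}"
    (is "(?g has_integral _) _")
proof (cases "z = 0")
  case True
  then show ?thesis using has_integral_const_real[of "f 0" 0 1] by (simp add: Ct_path_def Ct_at_0)
next
  case False
  obtain \<Phi> where \<Phi>: "\<forall>x\<in>ball 0 1. (\<Phi> has_field_derivative f x / (1 - of_real t * x)) (at x)"
    using Ct_integrand_primitive[OF t f] by blast
  have zn: "cmod z \<le> 1" and tz: "1 - of_real t * z \<noteq> 0"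
    using z one_minus_of_real_mult_nonzero[OF t] by auto
  have "((\<lambda>s. \<Phi> (Ct_path t z (of_real s))) has_vector_derivative z / (1 - of_real t * z) * ?g s)
          (at s within {0..1})" if s: "s \<in> {0..1}" for s
  proof -
    let ?D = "1 - of_real t * z + of_real t * z * of_real s"
    have D: "?D \<noteq> 0" using Ct_path_denom_bounds[OF t zn s] by simp
    have "Ct_path t z (of_real s) \<in> ball 0 1"
      using Ct_path_in_cball[OF t zn s] z by simp
    moreover have "(Ct_path t z has_field_derivative z * (1 - of_real t * z) / ?D^2) (at (of_real s))"
      unfolding Ct_path_def[abs_def] using D
      by (auto intro!: derivative_eq_intros simp: field_simps power2_eq_square)
    ultimately have chain: "((\<lambda>w. \<Phi> (Ct_path t z w)) has_field_derivative
        f (Ct_path t z (of_real s)) / (1 - of_real t * Ct_path t z (of_real s))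
          * (z * (1 - of_real t * z) / ?D^2)) (at (of_real s))"
      using \<Phi> by (intro DERIV_chain2) auto
    have om: "1 - of_real t * Ct_path t z (of_real s) = (1 - of_real t * z) / ?D"
      using D by (simp add: Ct_path_def field_simps)
    have alg: "a / (c / d) * (z * c / d^2) = z / c * (c / d * a)" if "d \<noteq> 0" "c \<noteq> 0" for a c d
      using that by (simp add: field_simps power2_eq_square)
    have "((\<lambda>w. \<Phi> (Ct_path t z w)) has_field_derivative z / (1 - of_real t * z) * ?g s) (at (of_real s))"
      using chain unfolding om alg[OF D tz] .
    then show ?thesis by (rule has_vector_derivative_real_field)
  qed
  note vd = this
  have "((\<lambda>s. z / (1 - of_real t * z) * ?g s) has_integral
      \<Phi> (Ct_path t z (of_real 1)) - \<Phi> (Ct_path t z (of_real 0))) {0..1}"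
    by (rule fundamental_theorem_of_calculus) (simp_all only: vd zero_le_one)
  then have "(?g has_integral (\<Phi> (Ct_path t z (of_real 1)) - \<Phi> (Ct_path t z (of_real 0)))
      / (z / (1 - of_real t * z))) {0..1}"
    using False tz by (subst has_integral_mult_right_iff[symmetric]) auto
  moreover have "(\<Phi> (Ct_path t z (of_real 1)) - \<Phi> (Ct_path t z (of_real 0))) / (z / (1 - of_real t * z))
      = (1 - of_real t * z) * Ct t f z"
    using Ct_eq_primitive[OF \<Phi> z False] tz False by (simp add: Ct_path_def)
  ultimately show ?thesis by simp
qed

lemma Schwarz_cball:
  assumes h: "h holomorphic_on ball 0 1" and h0: "h 0 = 0" and r: "0 < r" "r < 1"
    and hB: "\<And>\<xi>. \<xi> \<in> cball 0 r \<Longrightarrow> cmod (h \<xi>) \<le> B" and z: "z \<in> cball 0 r"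
  shows "cmod (h z) \<le> B * cmod z / r"
proof -
  obtain k where k: "k holomorphic_on ball 0 1" and hk: "\<And>z. cmod z < 1 \<Longrightarrow> h z = z * k z"
    using Schwarz3[OF h h0] by metis
  have sub: "ball 0 r \<subseteq> ball (0::complex) 1" "closure (ball 0 r) \<subseteq> ball (0::complex) 1"
    using r by auto
  obtain w where w: "w \<in> frontier (ball 0 r)"
    and kmax: "\<And>z. z \<in> closure (ball 0 r) \<Longrightarrow> cmod (k z) \<le> cmod (k w)"
  proof (rule Schwarz1[of k "ball 0 r"])
    show "k holomorphic_on ball 0 r" using holomorphic_on_subset[OF k sub(1)] .
    show "continuous_on (closure (ball 0 r)) k"
      using holomorphic_on_imp_continuous_on[OF holomorphic_on_subset[OF k sub(2)]] .
  qed (use r in auto)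
  have "cmod w = r" using w r by (simp add: frontier_ball)
  then have "r * cmod (k w) \<le> B"
    using hB[of w] hk[of w] r by (simp add: norm_mult)
  then have kw: "cmod (k w) \<le> B / r" using r by (simp add: field_simps)
  have "cmod (h z) = cmod z * cmod (k z)"
    using hk[of z] z r by (simp add: norm_mult)
  also have "\<dots> \<le> cmod z * (B / r)"
    using kmax[of z] kw z r by (intro mult_left_mono) auto
  finally show ?thesis by (simp add: mult_ac)
qed

lemma integral_affine_weight:
  "((\<lambda>s. B * (1 - (1 - t) * (1 - s))) has_integral (1 + t) / 2 * B) {0..1::real}"
proof -
  define Q where "Q s = B * (s - (1 - t) * (s - s^2 / 2))" for s :: real
  have "((\<lambda>s. B * (1 - (1 - t) * (1 - s))) has_integral Q 1 - Q 0) {0..1}"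
  proof (rule fundamental_theorem_of_calculus)
    fix s :: real
    show "(Q has_vector_derivative B * (1 - (1 - t) * (1 - s))) (at s within {0..1})"
      unfolding Q_def has_real_derivative_iff_has_vector_derivative[symmetric]
      by (auto intro!: derivative_eq_intros simp: field_simps)
  qed simp
  moreover have "Q 1 - Q 0 = (1 + t) / 2 * B" by (simp add: Q_def field_simps)
  ultimately show ?thesis by simp
qed

text \<open>The Schwarz lemma bounds the integrand of \<open>Ct_integral_repr\<close> by an affine function of
  \<open>s\<close>, whose mean \<open>(1 + t) / 2\<close> is the contraction factor.\<close>
lemma Ct_weighted_contraction:
  assumes t: "0 \<le> t" "t < 1" and f: "f \<in> HD" and f0: "f 0 = 0" and r: "0 < r" "r < 1"
    and fB: "\<And>\<xi>. \<xi> \<in> cball 0 r \<Longrightarrow> cmod ((1 - of_real t * \<xi>) * f \<xi>) \<le> B"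
    and z: "z \<in> cball 0 r"
  shows "cmod ((1 - of_real t * z) * Ct t f z) \<le> (1 + t) / 2 * B"
proof -
  have zn: "cmod z \<le> 1" using z r by simp
  have B: "0 \<le> B" using fB[of 0] r by (simp add: order_trans[OF norm_ge_zero])
  have hol: "(\<lambda>\<xi>. (1 - of_real t * \<xi>) * f \<xi>) holomorphic_on ball 0 1"
    using f unfolding HD_def by (auto intro!: holomorphic_intros)
  show ?thesis
  proof (rule has_integral_norm_bound_integral_component[where k="1::real", simplified])
    show "((\<lambda>s. (1 - of_real t * Ct_path t z (of_real s)) * f (Ct_path t z (of_real s)))
          has_integral ((1 - of_real t * z) * Ct t f z)) {0..1}"
      using z r by (intro Ct_integral_repr t f) auto
    show "((\<lambda>s. B * (1 - (1 - t) * (1 - s))) has_integral (1 + t) / 2 * B) {0..1}"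
      by (rule integral_affine_weight)
  next
    fix s :: real assume s: "s \<in> {0..1}"
    let ?\<gamma> = "Ct_path t z (of_real s)"
    have \<gamma>: "cmod ?\<gamma> \<le> cmod z * (1 - (1 - t) * (1 - s))" "cmod ?\<gamma> \<le> cmod z"
      using norm_Ct_path_le[OF t zn s] Ct_path_in_cball[OF t zn s] by auto
    have weight: "0 \<le> 1 - (1 - t) * (1 - s)"
      using t s mult_le_one[of "1 - t" "1 - s"] by auto
    have "cmod ((1 - of_real t * ?\<gamma>) * f ?\<gamma>) \<le> B * cmod ?\<gamma> / r"
      using Schwarz_cball[OF hol _ r fB] f0 \<gamma>(2) z by simp
    also have "\<dots> \<le> B * (cmod z * (1 - (1 - t) * (1 - s))) / r"
      using \<gamma>(1) B r by (intro divide_right_mono mult_left_mono) auto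
    also have "\<dots> = B * (1 - (1 - t) * (1 - s)) * (cmod z / r)"
      by simp
    also have "\<dots> \<le> B * (1 - (1 - t) * (1 - s))"
      using z r B weight by (intro mult_left_le) auto
    finally show "cmod ((1 - of_real t * ?\<gamma>) * f ?\<gamma>) \<le> B * (1 - (1 - t) * (1 - s))" .
  qed
qed

lemma Ct_pow_weighted_contraction:
  assumes t: "0 \<le> t" "t < 1" and f: "f \<in> HD" and f0: "f 0 = 0" and r: "0 < r" "r < 1"
    and fB: "\<And>\<xi>. \<xi> \<in> cball 0 r \<Longrightarrow> cmod ((1 - of_real t * \<xi>) * f \<xi>) \<le> B"
  shows "z \<in> cball 0 r \<Longrightarrow> cmod ((1 - of_real t * z) * (Ct t ^^ k) f z) \<le> ((1 + t) / 2) ^ k * B"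
proof (induction k arbitrary: z)
  case 0
  then show ?case using fB by simp
next
  case (Suc k)
  have "(Ct t ^^ k) f 0 = 0" by (simp add: Ct_pow_at_0 f0)
  from Ct_weighted_contraction[OF t Ct_pow_HD[OF t f] this r Suc.IH Suc.prems]
  show ?case by (simp add: mult_ac)
qed

lemma norm_Ct_pow_vanishing_le:
  assumes t: "0 \<le> t" "t < 1" and f: "f \<in> HD" and f0: "f 0 = 0"
    and z: "z \<in> cball 0 (pn_radius n)"
  shows "cmod ((Ct t ^^ k) f z) \<le> ((1 + t) / 2) ^ k * ((1 + t) / (1 - t) * pn n f)"
proof -
  have in_disc: "cmod \<xi> \<le> 1" if "\<xi> \<in> cball 0 (pn_radius n)" for \<xi>
    using that pn_radius_less_1[of n] by simp
  have "cmod ((1 - of_real t * \<xi>) * f \<xi>) \<le> (1 + t) * pn n f"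
    if "\<xi> \<in> cball 0 (pn_radius n)" for \<xi>
    unfolding norm_mult
    using norm_one_minus_of_real_mult_le[OF t(1) in_disc[OF that]] norm_le_pn[OF f that] t
    by (intro mult_mono) auto
  from Ct_pow_weighted_contraction[OF t f f0 pn_radius_pos pn_radius_less_1 this z]
  have "cmod (1 - of_real t * z) * cmod ((Ct t ^^ k) f z) \<le> ((1 + t) / 2) ^ k * ((1 + t) * pn n f)"
    by (simp add: norm_mult)
  moreover have "(1 - t) * cmod ((Ct t ^^ k) f z) \<le> cmod (1 - of_real t * z) * cmod ((Ct t ^^ k) f z)"
    using norm_one_minus_of_real_mult_ge[OF t(1) in_disc[OF z]] by (rule mult_right_mono) simp
  ultimately have "(1 - t) * cmod ((Ct t ^^ k) f z) \<le> ((1 + t) / 2) ^ k * ((1 + t) * pn n f)"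
    by linarith
  then show ?thesis using t by (simp add: field_simps)
qed

section \<open>Power boundedness and mean ergodicity\<close>

lemma Ct_pow_uniform_bound:
  assumes t: "0 \<le> t" "t < 1"
  obtains C where "\<And>n k f (z :: complex). f \<in> HD \<Longrightarrow> z \<in> cball 0 (pn_radius n)
    \<Longrightarrow> cmod ((Ct t ^^ k) f z) \<le> C * pn n f"
proof
  fix n k f and z :: complex assume f: "f \<in> HD" and z: "z \<in> cball 0 (pn_radius n)"
  define g where "g z = f z - ker_proj t f z" for z
  have g: "g \<in> HD" "g 0 = 0"
    unfolding g_def using vanishing_part_HD[OF t f] by (simp_all add: ker_proj_at_0)
  have "cmod ((Ct t ^^ k) f z) \<le> cmod (ker_proj t f z) + cmod ((Ct t ^^ k) g z)"
    unfolding Ct_pow_decomp[OF t f] g_def[abs_def] by (rule norm_triangle_ineq)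
  also have "\<dots> \<le> pn n f / (1 - t) + (1 + t) / (1 - t) * ((1 + 1 / (1 - t)) * pn n f)"
  proof (rule add_mono)
    show "cmod (ker_proj t f z) \<le> pn n f / (1 - t)"
      using norm_le_pn[OF ker_proj_HD[OF t, of f] z] pn_ker_proj_le[OF t f, of n] by linarith
    have "cmod ((Ct t ^^ k) g z) \<le> ((1 + t) / 2) ^ k * ((1 + t) / (1 - t) * pn n g)"
      by (rule norm_Ct_pow_vanishing_le[OF t g z])
    also have "\<dots> \<le> 1 * ((1 + t) / (1 - t) * pn n g)"
      using t pn_nonneg[OF g(1), of n] by (intro mult_right_mono power_le_one) auto
    also have "\<dots> \<le> (1 + t) / (1 - t) * ((1 + 1 / (1 - t)) * pn n f)"
      unfolding mult_1 g_def using pn_vanishing_part_le[OF t f] t by (intro mult_left_mono) auto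
    finally show "cmod ((Ct t ^^ k) g z) \<le> (1 + t) / (1 - t) * ((1 + 1 / (1 - t)) * pn n f)" .
  qed
  also have "\<dots> = (1 / (1 - t) + (1 + t) / (1 - t) * (1 + 1 / (1 - t))) * pn n f"
    by (simp add: distrib_right)
  finally show "cmod ((Ct t ^^ k) f z) \<le> (1 / (1 - t) + (1 + t) / (1 - t) * (1 + 1 / (1 - t))) * pn n f" .
qed

lemma Ct_power_bounded:
  assumes t: "0 \<le> t" "t < 1"
  shows "power_bounded_H (Ct t)"
proof -
  obtain C where C: "\<And>n k f (z :: complex). f \<in> HD \<Longrightarrow> z \<in> cball 0 (pn_radius n)
      \<Longrightarrow> cmod ((Ct t ^^ k) f z) \<le> C * pn n f"
    using Ct_pow_uniform_bound[OF t] by blast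
  show ?thesis
    unfolding power_bounded_H_def
  proof (intro allI exI ballI)
    fix n k f assume "f \<in> HD"
    then show "pn n ((Ct t ^^ k) f) \<le> C * pn n f" using C by (intro pn_le)
  qed
qed

lemma power_bounded_imp_continuous_H: "power_bounded_H T \<Longrightarrow> continuous_H T"
  unfolding power_bounded_H_def continuous_H_def
proof (intro allI)
  fix n assume "\<forall>n. \<exists>m C. \<forall>k. \<forall>f\<in>HD. pn n ((T ^^ k) f) \<le> C * pn m f"
  then obtain m C where "\<And>f. f \<in> HD \<Longrightarrow> pn n ((T ^^ 1) f) \<le> C * pn m f" by blast
  then show "\<exists>m C. \<forall>f\<in>HD. pn n (T f) \<le> C * pn m f" by auto
qed

lemma pn_cesaro_Ct_minus_ker_proj_le:
  assumes t: "0 \<le> t" "t < 1"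
  obtains D where "0 \<le> D" and "\<And>n (k :: nat) f. f \<in> HD \<Longrightarrow> 0 < k
    \<Longrightarrow> pn n (\<lambda>z. cesaro (Ct t) k f z - ker_proj t f z) \<le> D * pn n f / real k"
proof
  define q where "q = (1 + t) / 2"
  have q: "0 \<le> q" "q < 1" using t by (auto simp: q_def)
  define A where "A = (1 + t) / (1 - t) * (1 + 1 / (1 - t))"
  show "0 \<le> A / (1 - q)" using t q by (simp add: A_def)
  fix n f and k :: nat assume f: "f \<in> HD" and k: "0 < k"
  define g where "g z = f z - ker_proj t f z" for z
  have g: "g \<in> HD" "g 0 = 0"
    unfolding g_def using vanishing_part_HD[OF t f] by (simp_all add: ker_proj_at_0)
  have geometric: "(\<Sum>m=1..k. q ^ m) \<le> 1 / (1 - q)"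
  proof -
    have "(\<Sum>m=1..k. q ^ m) \<le> (\<Sum>m. q ^ m)"
      using q by (intro sum_le_suminf summable_geometric) auto
    also have "\<dots> = 1 / (1 - q)" using q by (intro suminf_geometric) auto
    finally show ?thesis .
  qed
  show "pn n (\<lambda>z. cesaro (Ct t) k f z - ker_proj t f z) \<le> A / (1 - q) * pn n f / real k"
  proof (rule pn_le)
    fix z :: complex assume z: "z \<in> cball 0 (pn_radius n)"
    have "cesaro (Ct t) k f z - ker_proj t f z = (\<Sum>m=1..k. (Ct t ^^ m) g z) / of_nat k"
      using k unfolding cesaro_def Ct_pow_decomp[OF t f] g_def[abs_def]
      by (simp add: sum.distrib field_simps)
    then have "cmod (cesaro (Ct t) k f z - ker_proj t f z) \<le> (\<Sum>m=1..k. cmod ((Ct t ^^ m) g z)) / real k"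
      by (simp add: norm_divide divide_right_mono[OF norm_sum])
    also have "\<dots> \<le> (\<Sum>m=1..k. q ^ m * ((1 + t) / (1 - t) * pn n g)) / real k"
      using norm_Ct_pow_vanishing_le[OF t g z] by (intro divide_right_mono sum_mono) (simp_all add: q_def)
    also have "\<dots> = (\<Sum>m=1..k. q ^ m) * ((1 + t) / (1 - t) * pn n g) / real k"
      by (simp only: sum_distrib_right)
    also have "\<dots> \<le> 1 / (1 - q) * (A * pn n f) / real k"
    proof (rule divide_right_mono, rule mult_mono[OF geometric])
      show "(1 + t) / (1 - t) * pn n g \<le> A * pn n f"
        unfolding A_def g_def mult.assoc using pn_vanishing_part_le[OF t f] t by (intro mult_left_mono) auto
    qed (use t pn_nonneg[OF g(1)] q in \<open>auto intro: sum_nonneg\<close>)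
    finally show "cmod (cesaro (Ct t) k f z - ker_proj t f z) \<le> A / (1 - q) * pn n f / real k"
      by simp
  qed
qed

lemma Ct_uniformly_mean_ergodic:
  assumes t: "0 \<le> t" "t < 1"
  shows "uniformly_mean_ergodic_H (Ct t)"
  unfolding uniformly_mean_ergodic_H_def
proof (intro exI[of _ "ker_proj t"] conjI allI impI ballI)
  show "linear_H (ker_proj t)"
    unfolding linear_H_def ker_proj_def by (auto simp: algebra_simps)
  show "continuous_H (ker_proj t)"
    unfolding continuous_H_def
  proof (intro allI exI ballI)
    fix n f assume "f \<in> HD"
    then show "pn n (ker_proj t f) \<le> 1 / (1 - t) * pn n f"
      using pn_ker_proj_le[OF t] by simp
  qed
  fix f assume "f \<in> HD"
  show "ker_proj t f \<in> HD" by (rule ker_proj_HD[OF t])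
next
  fix B n and \<epsilon> :: real
  assume B: "bounded_H B" and \<epsilon>: "0 < \<epsilon>"
  obtain M where M: "\<And>f. f \<in> B \<Longrightarrow> pn n f \<le> M" "0 \<le> M"
    using B unfolding bounded_H_def by (metis max.cobounded1 max.coboundedI2 order_trans)
  obtain D where D: "0 \<le> D" and cesaro: "\<And>n (k :: nat) f. f \<in> HD \<Longrightarrow> 0 < k
      \<Longrightarrow> pn n (\<lambda>z. cesaro (Ct t) k f z - ker_proj t f z) \<le> D * pn n f / real k"
    using pn_cesaro_Ct_minus_ker_proj_le[OF t] by blast
  obtain N :: nat where N: "D * M / \<epsilon> < real N" using reals_Archimedean2 by blast
  show "\<forall>\<^sub>F k in sequentially. \<forall>f\<in>B. pn n (\<lambda>z. cesaro (Ct t) k f z - ker_proj t f z) \<le> \<epsilon>"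
    unfolding eventually_sequentially
  proof (intro exI[of _ "N + 1"] allI impI ballI)
    fix k f assume k: "N + 1 \<le> k" and f: "f \<in> B"
    have "pn n (\<lambda>z. cesaro (Ct t) k f z - ker_proj t f z) \<le> D * pn n f / real k"
      using f k B cesaro by (auto simp: bounded_H_def)
    also have "\<dots> \<le> D * M / real k"
      using M f D k by (intro divide_right_mono mult_left_mono) auto
    also have "\<dots> \<le> \<epsilon>"
    proof -
      have "\<epsilon> * real N \<le> \<epsilon> * real k" using k \<epsilon> by (intro mult_left_mono) auto
      moreover have "D * M < \<epsilon> * real N" using N \<epsilon> by (simp add: pos_divide_less_eq mult.commute)
      ultimately have "D * M \<le> \<epsilon> * real k" by linarith
      then show ?thesis using k by (simp add: divide_le_eq mult.commute)
    qed
    finally show "pn n (\<lambda>z. cesaro (Ct t) k f z - ker_proj t f z) \<le> \<epsilon>" .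
  qed
qed

section \<open>Supercyclicity, range and kernel\<close>

text \<open>Approximating \<open>g\<close> with \<open>g 0 = 1\<close> forces \<open>|c| \<le> 2 / |x 0|\<close>, so \<open>c T\<^sup>k x\<close> stays bounded at \<open>w\<close>
  while \<open>g w\<close> can be chosen arbitrarily large.\<close>
lemma not_supercyclic_H_if_orbits_bounded_at:
  assumes T_HD: "\<And>k x. x \<in> HD \<Longrightarrow> (T ^^ k) x \<in> HD"
    and T_at_0: "\<And>k x. (T ^^ k) x 0 = x 0"
    and w: "w \<in> ball 0 1" "w \<noteq> 0"
    and bounded: "\<And>x. x \<in> HD \<Longrightarrow> \<exists>C. \<forall>k. cmod ((T ^^ k) x w) \<le> C"
  shows "\<not> supercyclic_H T"
proof
  assume "supercyclic_H T"
  then obtain x where x: "x \<in> HD"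
    and dense: "\<And>g n \<epsilon>. g \<in> HD \<Longrightarrow> \<epsilon> > 0 \<Longrightarrow> \<exists>c k. pn n (\<lambda>z. c * (T ^^ k) x z - g z) < \<epsilon>"
    unfolding supercyclic_H_def by blast
  obtain C where C: "\<And>k. cmod ((T ^^ k) x w) \<le> C" using bounded[OF x] by blast
  obtain n where n: "w \<in> cball 0 (pn_radius n)" using in_some_pn_cball[OF w(1)] .
  have C0: "0 \<le> C" using C[of 0] by (rule order_trans[OF norm_ge_zero])
  define L where "L = 3 + 2 / cmod (x 0) * C"
  define g where "g z = (if z \<in> ball 0 1 then 1 + of_real L * z / w else 0)" for z
  have g: "g \<in> HD" unfolding g_def[abs_def] using w(2) by (intro HD_restrict holomorphic_intros) auto
  obtain c k where approx: "pn n (\<lambda>z. c * (T ^^ k) x z - g z) < 1"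
    using dense[OF g] by (meson zero_less_one)
  have diff: "(\<lambda>z. c * (T ^^ k) x z - g z) \<in> HD" by (intro HD_diff HD_cmult T_HD x g)
  have "cmod (c * x 0 - 1) < 1"
    using norm_at_0_le_pn[OF diff, of n] approx by (simp add: T_at_0 g_def)
  then have "x 0 \<noteq> 0" and "cmod c * cmod (x 0) < 2"
    using norm_triangle_ineq2[of "c * x 0" 1] by (auto simp: norm_mult)
  then have "cmod c \<le> 2 / cmod (x 0)" by (simp add: field_simps)
  then have orbit: "cmod (c * (T ^^ k) x w) \<le> 2 / cmod (x 0) * C"
    unfolding norm_mult using C[of k] by (intro mult_mono) auto
  have "cmod (c * (T ^^ k) x w - (1 + of_real L)) < 1"
    using norm_le_pn[OF diff n] approx w by (simp add: g_def)
  then have "cmod (1 + of_real L :: complex) < 1 + 2 / cmod (x 0) * C"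
    using orbit norm_triangle_ineq3[of "c * (T ^^ k) x w" "1 + of_real L"] by simp
  moreover have "cmod (1 + of_real L :: complex) = 4 + 2 / cmod (x 0) * C"
  proof -
    have "(1 + of_real L :: complex) = of_real (4 + 2 / cmod (x 0) * C)" by (simp add: L_def)
    then show ?thesis using C0 by (simp only: norm_of_real) simp
  qed
  ultimately show False by simp
qed

lemma Ct_not_supercyclic:
  assumes t: "0 \<le> t" "t < 1"
  shows "\<not> supercyclic_H (Ct t)"
proof (rule not_supercyclic_H_if_orbits_bounded_at)
  show "(Ct t ^^ k) x \<in> HD" if "x \<in> HD" for k x using Ct_pow_HD[OF t that] .
  show "(Ct t ^^ k) x 0 = x 0" for k x by (rule Ct_pow_at_0)
  show "1/2 \<in> ball (0::complex) 1" "(1/2::complex) \<noteq> 0" by auto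
  obtain C where C: "\<And>n k f (z :: complex). f \<in> HD \<Longrightarrow> z \<in> cball 0 (pn_radius n)
      \<Longrightarrow> cmod ((Ct t ^^ k) f z) \<le> C * pn n f"
    using Ct_pow_uniform_bound[OF t] by blast
  show "\<exists>C. \<forall>k. cmod ((Ct t ^^ k) x (1/2)) \<le> C" if "x \<in> HD" for x
    using C[OF that, of "1/2" 0] by (auto simp: pn_radius_def)
qed

lemma Ct_linear_H:
  assumes t: "0 \<le> t" "t < 1"
  shows "linear_H (Ct t)"
  unfolding linear_H_def
proof (intro ballI allI conjI)
  fix f g a assume f: "f \<in> HD" and g: "g \<in> HD"
  show "Ct t (\<lambda>z. f z + g z) = (\<lambda>z. Ct t f z + Ct t g z)"
    using Ct_lincomb[OF t f g, of 1 1] by simp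
  show "Ct t (\<lambda>z. a * f z) = (\<lambda>z. a * Ct t f z)"
    using Ct_lincomb[OF t f f, of a 0] by simp
qed

text \<open>The ansatz \<open>Ct t f = K / (1 - tz)\<close> with \<open>K' z = g z / z\<close> solves \<open>f - Ct t f = g\<close>.\<close>
lemma I_minus_Ct_onto_vanishing:
  assumes t: "0 \<le> t" "t < 1" and g: "g \<in> HD" "g 0 = 0"
  obtains f where "f \<in> HD" "(\<lambda>z. f z - Ct t f z) = g"
proof -
  have g_hol: "g holomorphic_on ball 0 1" using g by (simp add: HD_def)
  define k where "k z = (if z = 0 then deriv g 0 else (g z - g 0) / (z - 0))" for z
  have "k holomorphic_on ball 0 1" unfolding k_def[abs_def] by (rule pole_lemma[OF g_hol]) auto
  then obtain K0 where K0: "\<And>x. x \<in> ball 0 1 \<Longrightarrow> (K0 has_field_derivative k x) (at x)"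
    using holomorphic_convex_primitive_at[OF _ convex_ball open_ball] by blast
  define K where "K z = K0 z - K0 0" for z
  have K: "\<And>x. x \<in> ball 0 1 \<Longrightarrow> (K has_field_derivative k x) (at x)"
    unfolding K_def[abs_def] using K0 by (auto intro!: derivative_eq_intros)
  then have K_hol: "K holomorphic_on ball 0 1"
    unfolding holomorphic_on_open[OF open_ball] field_differentiable_def by blast
  define f where "f z = (if z \<in> ball 0 1 then g z + K z / (1 - of_real t * z) else 0)" for z
  have f: "f \<in> HD" unfolding f_def[abs_def] using g_hol K_hol one_minus_of_real_mult_nonzero[OF t]
    by (intro HD_restrict holomorphic_intros) auto
  have \<Phi>: "\<forall>x\<in>ball 0 1. ((\<lambda>x. x * K x / (1 - of_real t * x)) has_field_derivative
      f x / (1 - of_real t * x)) (at x)"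
  proof
    fix x :: complex assume x: "x \<in> ball 0 1"
    have d: "1 - of_real t * x \<noteq> 0" using x one_minus_of_real_mult_nonzero[OF t] by simp
    have "((\<lambda>x. 1 - of_real t * x) has_field_derivative - of_real t) (at x)"
      by (auto intro!: derivative_eq_intros)
    from DERIV_divide[OF DERIV_mult[OF DERIV_ident K[OF x]] this d]
    have "((\<lambda>x. x * K x / (1 - of_real t * x)) has_field_derivative
        ((1 * K x + k x * x) * (1 - of_real t * x) - x * K x * - of_real t)
          / ((1 - of_real t * x) * (1 - of_real t * x))) (at x)" .
    moreover have "((1 * K' + G) * (1 - c * x) - x * K' * - c) / ((1 - c * x) * (1 - c * x))
        = (G + K' / (1 - c * x)) / (1 - c * x)" if "1 - c * x \<noteq> 0" for K' G c :: complex
      using that by (simp add: field_simps)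
    moreover have "k x * x = g x" using g(2) by (simp add: k_def)
    ultimately show "((\<lambda>x. x * K x / (1 - of_real t * x)) has_field_derivative
        f x / (1 - of_real t * x)) (at x)"
      using x d by (simp add: f_def)
  qed
  have "f z - Ct t f z = g z" for z
  proof (cases "z \<in> ball 0 1 \<and> z \<noteq> 0")
    case True
    then have z: "z \<in> ball 0 1" "z \<noteq> 0" by auto
    have "Ct t f z = K z / (1 - of_real t * z)"
      using Ct_eq_primitive[OF \<Phi> z] z by (simp add: K_def)
    then show ?thesis using z by (simp add: f_def)
  qed (use g in \<open>auto simp: f_def Ct_def HD_def\<close>)
  then show ?thesis using that f by blast
qed

lemma range_I_minus_Ct:
  assumes t: "0 \<le> t" "t < 1"
  shows "(\<lambda>f z. f z - Ct t f z) ` HD = {g \<in> HD. g 0 = 0}"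
proof (intro equalityI subsetI)
  fix g assume "g \<in> (\<lambda>f z. f z - Ct t f z) ` HD"
  then show "g \<in> {g \<in> HD. g 0 = 0}" using HD_diff Ct_HD[OF t] by (auto simp: Ct_at_0)
next
  fix g assume "g \<in> {g \<in> HD. g 0 = 0}"
  then obtain f where "f \<in> HD" "(\<lambda>z. f z - Ct t f z) = g"
    using I_minus_Ct_onto_vanishing[OF t] by blast
  then show "g \<in> (\<lambda>f z. f z - Ct t f z) ` HD" by blast
qed

lemma vanishing_fixed_point_Ct_eq_0:
  assumes t: "0 \<le> t" "t < 1" and f: "f \<in> HD" "f 0 = 0" and fixed: "Ct t f = f"
  shows "f = (\<lambda>z. 0)"
proof
  fix z :: complex
  show "f z = 0"
  proof (cases "z \<in> ball 0 1")
    case True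
    then obtain n where z: "z \<in> cball 0 (pn_radius n)" by (rule in_some_pn_cball)
    have "(Ct t ^^ k) f = f" for k using fixed by (induction k) auto
    then have "cmod (f z) \<le> ((1 + t) / 2) ^ k * ((1 + t) / (1 - t) * pn n f)" for k
      using norm_Ct_pow_vanishing_le[OF t f z, of k] by simp
    moreover have "(\<lambda>k. ((1 + t) / 2) ^ k * ((1 + t) / (1 - t) * pn n f)) \<longlonglongrightarrow> 0"
      using t by (intro tendsto_mult_left_zero LIMSEQ_power_zero) auto
    ultimately have "cmod (f z) \<le> 0" by (intro LIMSEQ_le_const) auto
    then show ?thesis by simp
  qed (use f in \<open>simp add: HD_def\<close>)
qed

lemma fixed_points_Ct:
  assumes t: "0 \<le> t" "t < 1"
  shows "{f \<in> HD. \<forall>z. f z - Ct t f z = 0} = {f. \<exists>c. f = (\<lambda>z. c * fixed_fun t z)}"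
proof (intro equalityI subsetI)
  fix f assume "f \<in> {f \<in> HD. \<forall>z. f z - Ct t f z = 0}"
  then have f: "f \<in> HD" and fixed: "Ct t f = f" by (auto simp: fun_eq_iff)
  define g where "g z = f z - ker_proj t f z" for z
  have g: "g \<in> HD" "g 0 = 0"
    unfolding g_def[abs_def] using vanishing_part_HD[OF t f] by (simp_all add: ker_proj_at_0)
  have "Ct t g = g"
    using Ct_lincomb[OF t f ker_proj_HD[OF t, of f], of 1 "-1"] fixed Ct_ker_proj[OF t, of f]
    by (simp add: g_def[abs_def])
  then have "g z = 0" for z using vanishing_fixed_point_Ct_eq_0[OF t g] by simp
  then have "f = ker_proj t f" by (auto simp: g_def fun_eq_iff)
  then show "f \<in> {f. \<exists>c. f = (\<lambda>z. c * fixed_fun t z)}" unfolding ker_proj_def by blast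
next
  fix f assume "f \<in> {f. \<exists>c. f = (\<lambda>z. c * fixed_fun t z)}"
  then obtain c where c: "f = (\<lambda>z. c * fixed_fun t z)" by blast
  have "Ct t f = f"
    using Ct_lincomb[OF t fixed_fun_HD[OF t] fixed_fun_HD[OF t], of c 0] c by (simp add: Ct_fixed_fun[OF t])
  then show "f \<in> {f \<in> HD. \<forall>z. f z - Ct t f z = 0}"
    using c HD_cmult[OF fixed_fun_HD[OF t]] by simp
qed

lemma subspace_H_vanishing_at_0: "subspace_H {g \<in> HD. g 0 = 0}"
  unfolding subspace_H_def using HD_zero HD_lincomb[of _ _ 1 1] HD_cmult by auto

lemma closed_H_vanishing_at_0: "closed_H {g \<in> HD. g 0 = 0}"
  unfolding closed_H_def
proof (intro allI impI)
  fix F g assume F: "\<forall>k. F k \<in> {g \<in> HD. g 0 = 0}" and g: "g \<in> HD"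
    and lim: "\<forall>n. (\<lambda>k. pn n (\<lambda>z. F k z - g z)) \<longlonglongrightarrow> 0"
  have "(\<lambda>k. F k 0) \<longlonglongrightarrow> g 0" using F g lim by (intro HD_pointwise_limit) auto
  moreover have "(\<lambda>k. F k 0) = (\<lambda>k. 0)" using F by auto
  ultimately have "g 0 = 0" using LIMSEQ_unique[OF _ tendsto_const] by metis
  then show "g \<in> {g \<in> HD. g 0 = 0}" using g by simp
qed

lemma subspace_H_multiples:
  assumes t: "0 \<le> t" "t < 1"
  shows "subspace_H {f. \<exists>c. f = (\<lambda>z. c * fixed_fun t z)}"
  unfolding subspace_H_def
proof (intro conjI ballI allI)
  show "{f. \<exists>c. f = (\<lambda>z. c * fixed_fun t z)} \<subseteq> HD"
    using HD_cmult[OF fixed_fun_HD[OF t]] by auto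
  show "(\<lambda>z. 0) \<in> {f. \<exists>c. f = (\<lambda>z. c * fixed_fun t z)}"
    by (auto intro: exI[of _ 0])
  fix f g a assume "f \<in> {f. \<exists>c. f = (\<lambda>z. c * fixed_fun t z)}" "g \<in> {f. \<exists>c. f = (\<lambda>z. c * fixed_fun t z)}"
  then obtain c d where "f = (\<lambda>z. c * fixed_fun t z)" "g = (\<lambda>z. d * fixed_fun t z)" by blast
  then show "(\<lambda>z. f z + g z) \<in> {f. \<exists>c. f = (\<lambda>z. c * fixed_fun t z)}"
    and "(\<lambda>z. a * f z) \<in> {f. \<exists>c. f = (\<lambda>z. c * fixed_fun t z)}"
    by (auto intro: exI[of _ "c + d"] exI[of _ "a * c"] simp: algebra_simps)
qed

lemma closed_H_multiples:
  assumes t: "0 \<le> t" "t < 1"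
  shows "closed_H {f. \<exists>c. f = (\<lambda>z. c * fixed_fun t z)}"
  unfolding closed_H_def
proof (intro allI impI)
  fix F g assume F: "\<forall>k. F k \<in> {f. \<exists>c. f = (\<lambda>z. c * fixed_fun t z)}" and g: "g \<in> HD"
    and lim: "\<forall>n. (\<lambda>k. pn n (\<lambda>z. F k z - g z)) \<longlonglongrightarrow> 0"
  have F_eq: "F k = (\<lambda>z. F k 0 * fixed_fun t z)" for k
  proof -
    obtain c where "F k = (\<lambda>z. c * fixed_fun t z)" using F by blast
    then show ?thesis by (simp add: fixed_fun_at_0)
  qed
  have "\<And>k. F k \<in> HD" by (subst F_eq) (rule HD_cmult[OF fixed_fun_HD[OF t]])
  then have pointwise: "\<And>z. (\<lambda>k. F k z) \<longlonglongrightarrow> g z"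
    using g lim by (intro HD_pointwise_limit) auto
  have "g z = g 0 * fixed_fun t z" for z
  proof -
    have "(\<lambda>k. F k 0 * fixed_fun t z) \<longlonglongrightarrow> g 0 * fixed_fun t z"
      using pointwise by (intro tendsto_mult_right)
    moreover have "(\<lambda>k. F k 0 * fixed_fun t z) = (\<lambda>k. F k z)"
      by (subst (2) F_eq) simp
    ultimately show ?thesis using LIMSEQ_unique[OF pointwise[of z]] by simp
  qed
  then show "g \<in> {f. \<exists>c. f = (\<lambda>z. c * fixed_fun t z)}" by blast
qed

theorem proposition3p8:
  fixes t :: real
  assumes "0 \<le> t" and "t < 1"
  defines "R \<equiv> (\<lambda>f z. f z - Ct t f z) ` HD"
      and "K \<equiv> {f \<in> HD. \<forall>z. f z - Ct t f z = 0}"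
  shows "(\<forall>f\<in>HD. Ct t f \<in> HD) \<and> linear_H (Ct t) \<and> continuous_H (Ct t)
    \<and> power_bounded_H (Ct t) \<and> uniformly_mean_ergodic_H (Ct t) \<and> \<not> supercyclic_H (Ct t)
    \<and> R = {g \<in> HD. g 0 = 0} \<and> subspace_H R \<and> closed_H R
    \<and> subspace_H K \<and> closed_H K
    \<and> K \<inter> R = {\<lambda>z. 0}
    \<and> (\<forall>f\<in>HD. \<exists>a\<in>K. \<exists>b\<in>R. f = (\<lambda>z. a z + b z))"
proof -
  note t = assms(1,2)
  have R: "R = {g \<in> HD. g 0 = 0}" unfolding R_def by (rule range_I_minus_Ct[OF t])
  have K: "K = {f. \<exists>c. f = (\<lambda>z. c * fixed_fun t z)}" unfolding K_def by (rule fixed_points_Ct[OF t])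
  have "K \<inter> R = {\<lambda>z. 0}"
    unfolding K R using HD_zero by (auto simp: fixed_fun_at_0 intro: exI[of _ 0])
  moreover have "\<exists>a\<in>K. \<exists>b\<in>R. f = (\<lambda>z. a z + b z)" if f: "f \<in> HD" for f
  proof (intro bexI)
    show "ker_proj t f \<in> K" unfolding K ker_proj_def by blast
    show "(\<lambda>z. f z - ker_proj t f z) \<in> R"
      unfolding R using vanishing_part_HD[OF t f] by (simp add: ker_proj_at_0)
  qed simp
  ultimately show ?thesis
    using Ct_HD[OF t] Ct_linear_H[OF t] Ct_power_bounded[OF t] power_bounded_imp_continuous_H
      Ct_uniformly_mean_ergodic[OF t] Ct_not_supercyclic[OF t] R subspace_H_vanishing_at_0
      closed_H_vanishing_at_0 subspace_H_multiples[OF t] closed_H_multiples[OF t]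
    unfolding K by blast
qed

end
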